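(* Let $H=(\mathcal{V},\mathcal{I})$ be an interval hypergraph and $k\geq1$ an integer. There exists a partition of $\mathcal{I}$ into $k$ parts such that each part is an exactly hittable set if and only if there exists a conflict-free colouring of $H$ with $k$ non-zero colours.
   Context: An interval hypergraph has vertex set $[n]=\{1,\dots,n\}$ and hyperedges that are nonempty sets of consecutive integers. A set (family) $\mathcal{S}$ of hyperedges is exactly hittable if there is a set $T\subseteq\mathcal{V}$ (an exact hitting set) with $|T\cap I|=1$ for every $I\in\mathcal{S}$. A conflict-free colouring of $H$ is a function $C:\mathcal{V}\to\{0,1,2,\dots\}$ such that every hyperedge $I$ contains a colour $j\geq1$ with $|I\cap C^{-1}(j)|=1$; colour $0$ is not counted among the colours used. *)

theory Defs
  imports Main
begin

definition interval_hypergraph :: "nat \<Rightarrow> nat set set \<Rightarrow> bool" where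
  "interval_hypergraph n E \<longleftrightarrow> (\<forall>I\<in>E. \<exists>a b. 1 \<le> a \<and> a \<le> b \<and> b \<le> n \<and> I = {a..b})"

definition exactly_hittable :: "nat set \<Rightarrow> nat set set \<Rightarrow> bool" where
  "exactly_hittable V S \<longleftrightarrow> (\<exists>T. T \<subseteq> V \<and> (\<forall>I\<in>S. card (T \<inter> I) = 1))"

text \<open>A conflict-free colouring of (V,E); colour 0 is the "uncoloured" colour.\<close>
definition conflict_free :: "nat set \<Rightarrow> nat set set \<Rightarrow> (nat \<Rightarrow> nat) \<Rightarrow> bool" where
  "conflict_free V E C \<longleftrightarrow> (\<forall>I\<in>E. \<exists>j\<ge>1. card (I \<inter> {v\<in>V. C v = j}) = 1)"

definition conflict_free_k :: "nat set \<Rightarrow> nat set set \<Rightarrow> nat \<Rightarrow> (nat \<Rightarrow> nat) \<Rightarrow> bool" where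
  "conflict_free_k V E k C \<longleftrightarrow> conflict_free V E C \<and> (\<forall>v\<in>V. C v \<le> k)"

text \<open>E is partitioned into the k (possibly empty) parts P 0, ..., P (k-1).\<close>
definition is_partition_k :: "nat set set \<Rightarrow> nat \<Rightarrow> (nat \<Rightarrow> nat set set) \<Rightarrow> bool" where
  "is_partition_k E k P \<longleftrightarrow> (\<Union>i<k. P i) = E \<and> (\<forall>i<k. \<forall>j<k. i \<noteq> j \<longrightarrow> P i \<inter> P j = {})"

end

theory Submission
  imports Defs
begin

text \<open>Exact hitting sets \<open>T\<^sub>i\<close> of the parts leave every hyperedge hit exactly once by some \<open>T\<^sub>i\<close>;
  if the \<open>T\<^sub>i\<close> were pairwise disjoint, giving the vertices of \<open>T\<^sub>i\<close> colour \<open>i + 1\<close> would be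
  conflict-free. Disjointness is reached by uncrossing. If \<open>v \<in> T \<inter> S\<close>, then either \<open>v\<close> can be
  dropped from one of the two sets, or there are witnesses \<open>w < v < w'\<close> (or the mirror image)
  showing that \<open>v\<close> is needed by both; in that case exchanging the parts of \<open>T\<close> and \<open>S\<close> to the
  right of \<open>v\<close>, and keeping \<open>v\<close> in one set only, still hits every interval that was hit exactly
  once before. Each step lowers \<open>\<Sum>\<^sub>i |T\<^sub>i|\<close>. Conversely, the colour classes of a
  conflict-free colouring are exact hitting sets of the hyperedges whose unique colour they carry.\<close>

definition hits_once :: "'a set \<Rightarrow> 'a set \<Rightarrow> bool" where
  "hits_once T I \<longleftrightarrow> (\<exists>u. T \<inter> I = {u})"

lemma hits_once_iff_card: "hits_once T I \<longleftrightarrow> card (T \<inter> I) = 1"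
  by (simp add: hits_once_def card_1_singleton_iff)

lemma hits_once_eq_singleton:
  assumes "hits_once T I" "v \<in> T" "v \<in> I"
  shows "T \<inter> I = {v}"
  using assms unfolding hits_once_def by (metis IntI singletonD)

lemma hits_once_Diff_singleton:
  assumes "hits_once T I \<or> hits_once S I" and "S \<inter> I = {v} \<Longrightarrow> T \<inter> I = {v}"
  shows "hits_once T I \<or> hits_once (S - {v}) I"
proof (cases "hits_once T I")
  case False
  then obtain u where u: "S \<inter> I = {u}" using assms(1) unfolding hits_once_def by blast
  show ?thesis
  proof (cases "u = v")
    case True
    then show ?thesis using u assms(2) unfolding hits_once_def by blast
  next
    case False
    then have "(S - {v}) \<inter> I = {u}" using u by blast
    then show ?thesis unfolding hits_once_def by blast
  qed
qed simp

lemma singleton_Int_interval_gap: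
  fixes v w :: "'a::linorder"
  assumes "S \<inter> {a..b} = {v}" "w \<in> {a..b}"
  shows "w < v \<Longrightarrow> S \<inter> {w..<v} = {}" and "v < w \<Longrightarrow> S \<inter> {v<..w} = {}"
proof -
  have v: "a \<le> v" "v \<le> b" using assms(1) by auto
  have "{w..<v} \<subseteq> {a..b} - {v}" "{v<..w} \<subseteq> {a..b} - {v}"
    using v assms(2) by (auto intro: order.trans less_imp_le)
  then show "w < v \<Longrightarrow> S \<inter> {w..<v} = {}" and "v < w \<Longrightarrow> S \<inter> {v<..w} = {}"
    using assms(1) by blast+
qed

lemma witnesses_on_opposite_sides:
  fixes v w w' :: "'a::linorder"
  assumes S1: "S \<inter> {a1..b1} = {v}" and w: "w \<in> T" "w \<in> {a1..b1}" "w \<noteq> v"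
    and T2: "T \<inter> {a2..b2} = {v}" and w': "w' \<in> S" "w' \<in> {a2..b2}" "w' \<noteq> v"
  shows "w < v \<longleftrightarrow> v < w'"
proof -
  have "v \<in> {a1..b1}" "v \<in> {a2..b2}" "w' \<notin> {a1..b1}" "w \<notin> {a2..b2}"
    using S1 T2 w w' by blast+
  then show ?thesis using w(2,3) w'(2,3) by (auto simp: not_le)
qed

lemma swap_tails_Int_interval_through:
  fixes T S :: "'a::linorder set"
  assumes "v \<in> T" "v \<in> S"
    and "w \<in> T" "w < v" "S \<inter> {w..<v} = {}"
    and "w' \<in> S" "v < w'" "T \<inter> {v<..w'} = {}"
    and v_in: "v \<in> {a..b}" and hit: "hits_once T {a..b} \<or> hits_once S {a..b}"
  shows "({x\<in>S. x < v} \<union> {v} \<union> {x\<in>T. v < x}) \<inter> {a..b} = {v}"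
proof -
  have "x = v" if x: "x \<in> S \<and> x < v \<or> x \<in> T \<and> v < x" "x \<in> {a..b}" for x
  proof (rule ccontr)
    assume "x \<noteq> v"
    from x(1) show False
    proof
      assume x_left: "x \<in> S \<and> x < v"
      from hit v_in have "S \<inter> {a..b} \<noteq> {v} \<Longrightarrow> T \<inter> {a..b} = {v}"
        using assms(1,2) hits_once_eq_singleton by metis
      moreover have "S \<inter> {a..b} \<noteq> {v}" using x x_left \<open>x \<noteq> v\<close> by blast
      ultimately have "w \<notin> {a..b}" using assms(3,4) by (metis IntI less_irrefl singletonD)
      moreover have "w \<le> b" using assms(4) v_in by (meson atLeastAtMost_iff less_le_trans less_imp_le)
      ultimately have "w < a" by (meson atLeastAtMost_iff not_le)
      then have "x \<in> S \<inter> {w..<v}" using x(2) x_left by (auto intro: less_imp_le dest: less_le_trans)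
      then show False using assms(5) by blast
    next
      assume x_right: "x \<in> T \<and> v < x"
      from hit v_in have "T \<inter> {a..b} \<noteq> {v} \<Longrightarrow> S \<inter> {a..b} = {v}"
        using assms(1,2) hits_once_eq_singleton by metis
      moreover have "T \<inter> {a..b} \<noteq> {v}" using x x_right \<open>x \<noteq> v\<close> by blast
      ultimately have "w' \<notin> {a..b}" using assms(6,7) by (metis IntI less_irrefl singletonD)
      moreover have "a \<le> w'" using assms(7) v_in by (meson atLeastAtMost_iff le_less_trans less_imp_le)
      ultimately have "b < w'" by (meson atLeastAtMost_iff not_le)
      then have "x \<in> T \<inter> {v<..w'}" using x(2) x_right by (auto intro: less_imp_le dest: le_less_trans)
      then show False using assms(8) by blast
    qed
  qed
  then show ?thesis using v_in by blast
qed

lemma hits_once_swap_tails: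
  fixes T S :: "'a::linorder set"
  assumes "v \<in> T" "v \<in> S"
    and "w \<in> T" "w < v" "S \<inter> {w..<v} = {}"
    and "w' \<in> S" "v < w'" "T \<inter> {v<..w'} = {}"
    and hit: "hits_once T {a..b} \<or> hits_once S {a..b}"
  shows "hits_once ({x\<in>T. x < v} \<union> {x\<in>S. v < x}) {a..b}
       \<or> hits_once ({x\<in>S. x < v} \<union> {v} \<union> {x\<in>T. v < x}) {a..b}"
    (is "hits_once ?A _ \<or> hits_once ?B _")
proof -
  consider "b < v" | "v < a" | "v \<in> {a..b}" by (meson atLeastAtMost_iff not_le)
  then show ?thesis
  proof cases
    case 1
    then have "x < v" if "x \<in> {a..b}" for x
      using that by (meson atLeastAtMost_iff le_less_trans)
    then have "?A \<inter> {a..b} = T \<inter> {a..b}" "?B \<inter> {a..b} = S \<inter> {a..b}"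
      using less_asym by blast+
    then show ?thesis using hit unfolding hits_once_def by simp
  next
    case 2
    then have "v < x" if "x \<in> {a..b}" for x
      using that by (meson atLeastAtMost_iff less_le_trans)
    then have "?A \<inter> {a..b} = S \<inter> {a..b}" "?B \<inter> {a..b} = T \<inter> {a..b}"
      using less_asym by blast+
    then show ?thesis using hit unfolding hits_once_def by metis
  next
    case 3
    then have "?B \<inter> {a..b} = {v}"
      using swap_tails_Int_interval_through[OF assms(1-8) 3 hit] by simp
    then show ?thesis unfolding hits_once_def by blast
  qed
qed

lemma uncross_crossing:
  fixes T S :: "'a::linorder set"
  assumes "v \<in> T" "v \<in> S"
    and "w \<in> T" "w < v" "S \<inter> {w..<v} = {}"
    and "w' \<in> S" "v < w'" "T \<inter> {v<..w'} = {}"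
  obtains A B where "A \<union> B = T \<union> S" "A \<inter> B = T \<inter> S - {v}"
    "\<And>a b. hits_once T {a..b} \<or> hits_once S {a..b} \<Longrightarrow> hits_once A {a..b} \<or> hits_once B {a..b}"
proof (rule that)
  show "({x\<in>T. x < v} \<union> {x\<in>S. v < x}) \<union> ({x\<in>S. x < v} \<union> {v} \<union> {x\<in>T. v < x}) = T \<union> S"
    "({x\<in>T. x < v} \<union> {x\<in>S. v < x}) \<inter> ({x\<in>S. x < v} \<union> {v} \<union> {x\<in>T. v < x}) = T \<inter> S - {v}"
    using assms(1) by (auto simp: linorder_neq_iff dest: less_asym)
qed (rule hits_once_swap_tails[OF assms])

lemma uncross_at_common_point:
  fixes T S :: "'a::linorder set"
  assumes vT: "v \<in> T" and vS: "v \<in> S"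
  obtains A B where "A \<union> B = T \<union> S" "A \<inter> B = T \<inter> S - {v}"
    "\<And>a b. hits_once T {a..b} \<or> hits_once S {a..b} \<Longrightarrow> hits_once A {a..b} \<or> hits_once B {a..b}"
proof (cases "\<forall>a b. S \<inter> {a..b} = {v} \<longrightarrow> T \<inter> {a..b} = {v}")
  case True
  show ?thesis
  proof (rule that[of T "S - {v}"])
    fix a b assume "hits_once T {a..b} \<or> hits_once S {a..b}"
    then show "hits_once T {a..b} \<or> hits_once (S - {v}) {a..b}"
      by (rule hits_once_Diff_singleton) (use True in blast)
  qed (use vT in blast)+
next
  case False
  then obtain a1 b1 where S1: "S \<inter> {a1..b1} = {v}" and "T \<inter> {a1..b1} \<noteq> {v}"
    by blast
  moreover have "v \<in> T \<inter> {a1..b1}" using vT S1 by blast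
  ultimately obtain w where w: "w \<in> T" "w \<in> {a1..b1}" "w \<noteq> v"
    by blast
  show ?thesis
  proof (cases "\<forall>a b. T \<inter> {a..b} = {v} \<longrightarrow> S \<inter> {a..b} = {v}")
    case True
    show ?thesis
    proof (rule that[of "T - {v}" S])
      fix a b assume "hits_once T {a..b} \<or> hits_once S {a..b}"
      then have "hits_once S {a..b} \<or> hits_once (T - {v}) {a..b}"
        by (intro hits_once_Diff_singleton) (use True in blast)+
      then show "hits_once (T - {v}) {a..b} \<or> hits_once S {a..b}" by blast
    qed (use vS in blast)+
  next
    case False
    then obtain a2 b2 where T2: "T \<inter> {a2..b2} = {v}" and "S \<inter> {a2..b2} \<noteq> {v}"
      by blast
    moreover have "v \<in> S \<inter> {a2..b2}" using vS T2 by blast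
    ultimately obtain w' where w': "w' \<in> S" "w' \<in> {a2..b2}" "w' \<noteq> v"
      by blast
    note gaps = singleton_Int_interval_gap[OF S1 w(2)] singleton_Int_interval_gap[OF T2 w'(2)]
    have "w < v \<and> v < w' \<or> w' < v \<and> v < w"
      using witnesses_on_opposite_sides[OF S1 w T2 w'] w(3) w'(3) by auto
    then consider
        "w < v" "v < w'" "S \<inter> {w..<v} = {}" "T \<inter> {v<..w'} = {}"
      | "w' < v" "v < w" "T \<inter> {w'..<v} = {}" "S \<inter> {v<..w} = {}"
      using gaps by blast
    then show ?thesis
    proof cases
      case 1
      show ?thesis by (rule uncross_crossing[OF vT vS w(1) 1(1,3) w'(1) 1(2,4) that])
    next
      case 2
      obtain A B where "A \<union> B = S \<union> T" "A \<inter> B = S \<inter> T - {v}"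
        "\<And>a b. hits_once S {a..b} \<or> hits_once T {a..b} \<Longrightarrow> hits_once A {a..b} \<or> hits_once B {a..b}"
        using uncross_crossing[OF vS vT w'(1) 2(1,3) w(1) 2(2,4)] by blast
      then show ?thesis using that[of B A] by blast
    qed
  qed
qed

lemma sum_less_by_two_terms:
  fixes f g :: "'i \<Rightarrow> nat"
  assumes "finite K" "i \<in> K" "j \<in> K" "i \<noteq> j"
    and "g i + g j < f i + f j" and "\<And>l. l \<in> K \<Longrightarrow> l \<noteq> i \<Longrightarrow> l \<noteq> j \<Longrightarrow> g l = f l"
  shows "sum g K < sum f K"
proof -
  have split: "sum h K = sum h (K - {i, j}) + (h i + h j)" for h :: "'i \<Rightarrow> nat"
    using sum.subset_diff[of "{i, j}" K h] assms(1-4) by simp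
  have "sum g (K - {i, j}) = sum f (K - {i, j})"
    by (rule sum.cong) (use assms(6) in auto)
  then show ?thesis using split[of f] split[of g] assms(5) by linarith
qed

lemma card_uncrossed_less:
  assumes "finite T" "finite S" "v \<in> T" "v \<in> S"
    and "A \<union> B = T \<union> S" "A \<inter> B = T \<inter> S - {v}"
  shows "card A + card B < card T + card S"
proof -
  have "finite A" "finite B" using assms(1,2,5) by (metis finite_Un)+
  then have "card A + card B = card (T \<union> S) + card (T \<inter> S - {v})"
    using card_Un_Int assms(5,6) by metis
  moreover have "card T + card S = card (T \<union> S) + card (T \<inter> S)"
    using card_Un_Int assms(1,2) by blast
  moreover have "card (T \<inter> S - {v}) < card (T \<inter> S)"
    using assms(1-4) by (intro card_Diff1_less) auto
  ultimately show ?thesis by linarith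
qed

lemma disjoint_exact_hitting_family:
  fixes T :: "nat \<Rightarrow> 'a::linorder set"
  assumes "finite V" and intervals: "\<And>I. I \<in> E \<Longrightarrow> \<exists>a b. I = {a..b}"
    and "\<And>i. i < k \<Longrightarrow> T i \<subseteq> V" and "\<And>I. I \<in> E \<Longrightarrow> \<exists>i<k. hits_once (T i) I"
  shows "\<exists>D. (\<forall>i<k. D i \<subseteq> V) \<and> (\<forall>i<k. \<forall>j<k. i \<noteq> j \<longrightarrow> D i \<inter> D j = {})
    \<and> (\<forall>I\<in>E. \<exists>i<k. hits_once (D i) I)"
  using assms(3,4)
proof (induction "\<Sum>i<k. card (T i)" arbitrary: T rule: less_induct)
  case less
  show ?case
  proof (cases "\<forall>i<k. \<forall>j<k. i \<noteq> j \<longrightarrow> T i \<inter> T j = {}")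
    case True
    show ?thesis
      by (intro exI[of _ T] conjI allI ballI impI) (use True less.prems in auto)
  next
    case False
    then obtain i j v where ij: "i < k" "j < k" "i \<noteq> j" and v: "v \<in> T i" "v \<in> T j"
      by blast
    obtain A B where AB: "A \<union> B = T i \<union> T j" "A \<inter> B = T i \<inter> T j - {v}"
      and hits_AB: "\<And>a b. hits_once (T i) {a..b} \<or> hits_once (T j) {a..b}
        \<Longrightarrow> hits_once A {a..b} \<or> hits_once B {a..b}"
      by (fact uncross_at_common_point[OF v])
    define T' where "T' = T(i := A, j := B)"
    have T'_ij: "T' i = A" "T' j = B" and T'_other: "\<And>l. l \<noteq> i \<Longrightarrow> l \<noteq> j \<Longrightarrow> T' l = T l"
      using ij(3) by (auto simp: T'_def)
    have fin: "finite (T l)" if "l < k" for l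
      using less.prems(1)[OF that] assms(1) by (rule finite_subset)
    have "A \<subseteq> V" "B \<subseteq> V" using AB(1) less.prems(1) ij(1,2) by blast+
    then have T'_V: "T' l \<subseteq> V" if "l < k" for l
      using T'_ij T'_other less.prems(1)[OF that] by (cases "l = i \<or> l = j") auto
    have T'_hits: "\<exists>l<k. hits_once (T' l) I" if IE: "I \<in> E" for I
    proof -
      obtain a b where I: "I = {a..b}" using intervals[OF IE] by blast
      obtain l where l: "l < k" "hits_once (T l) I" using less.prems(2)[OF IE] by blast
      show ?thesis
      proof (cases "l = i \<or> l = j")
        case True
        then have "hits_once (T' i) I \<or> hits_once (T' j) I"
          using hits_AB l(2) T'_ij unfolding I by blast
        then show ?thesis using ij(1,2) by blast
      next
        case False
        then show ?thesis using l T'_other by metis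
      qed
    qed
    have "card A + card B < card (T i) + card (T j)"
      using fin[OF ij(1)] fin[OF ij(2)] v AB by (rule card_uncrossed_less)
    then have "(\<Sum>l<k. card (T' l)) < (\<Sum>l<k. card (T l))"
      using ij T'_ij T'_other by (intro sum_less_by_two_terms) auto
    then show ?thesis using less.hyps T'_V T'_hits by blast
  qed
qed

lemma colouring_of_disjoint_family:
  fixes D :: "nat \<Rightarrow> 'a set"
  assumes "\<And>i j. i < k \<Longrightarrow> j < k \<Longrightarrow> i \<noteq> j \<Longrightarrow> D i \<inter> D j = {}"
  obtains C :: "'a \<Rightarrow> nat" where "\<And>v. C v \<le> k" "\<And>i. i < k \<Longrightarrow> {v. C v = Suc i} = D i"
proof
  define C where "C v = (if \<exists>i<k. v \<in> D i then Suc (THE i. i < k \<and> v \<in> D i) else 0)" for v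
  have C_in: "C v = Suc i" if "i < k" "v \<in> D i" for i v
  proof -
    have "(THE i. i < k \<and> v \<in> D i) = i"
      using that assms by (intro the_equality) blast+
    then show ?thesis using that by (auto simp: C_def)
  qed
  show "C v \<le> k" for v
  proof (cases "\<exists>i<k. v \<in> D i")
    case True
    then obtain i where "i < k" "v \<in> D i" by blast
    then show ?thesis using C_in by simp
  qed (auto simp: C_def)
  show "{v. C v = Suc i} = D i" if "i < k" for i
  proof
    show "D i \<subseteq> {v. C v = Suc i}" using C_in that by blast
    show "{v. C v = Suc i} \<subseteq> D i"
    proof
      fix v assume "v \<in> {v. C v = Suc i}"
      then have "C v = Suc i" by simp
      moreover from this obtain j where "j < k" "v \<in> D j"
        by (auto simp: C_def split: if_splits)
      ultimately show "v \<in> D i" using C_in by fastforce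
    qed
  qed
qed

lemma conflict_free_k_of_exactly_hittable_partition:
  assumes "finite V" and intervals: "\<And>I. I \<in> E \<Longrightarrow> \<exists>a b. I = {a..b}"
    and "is_partition_k E k P" and "\<forall>i<k. exactly_hittable V (P i)"
  shows "\<exists>C. conflict_free_k V E k C"
proof -
  have "\<forall>i. \<exists>T. i < k \<longrightarrow> T \<subseteq> V \<and> (\<forall>I\<in>P i. hits_once T I)"
    using assms(4) unfolding exactly_hittable_def hits_once_iff_card by blast
  then obtain T where "\<forall>i. i < k \<longrightarrow> T i \<subseteq> V \<and> (\<forall>I\<in>P i. hits_once (T i) I)"
    by (rule choice[THEN exE])
  then have T: "\<And>i. i < k \<Longrightarrow> T i \<subseteq> V" "\<And>i I. i < k \<Longrightarrow> I \<in> P i \<Longrightarrow> hits_once (T i) I"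
    by blast+
  have covered: "\<exists>i<k. hits_once (T i) I" if I: "I \<in> E" for I
  proof -
    obtain i where "i < k" "I \<in> P i" using I assms(3) unfolding is_partition_k_def by blast
    then show ?thesis using T(2) by blast
  qed
  obtain D where D: "\<forall>i<k. D i \<subseteq> V" "\<forall>i<k. \<forall>j<k. i \<noteq> j \<longrightarrow> D i \<inter> D j = {}"
    "\<forall>I\<in>E. \<exists>i<k. hits_once (D i) I"
    using disjoint_exact_hitting_family[OF assms(1) intervals T(1) covered] by metis
  obtain C where C: "\<And>v. C v \<le> k" "\<And>i. i < k \<Longrightarrow> {v. C v = Suc i} = D i"
    using colouring_of_disjoint_family[of k D, OF D(2)[rule_format]] by metis
  have "\<exists>j\<ge>1. card (I \<inter> {v\<in>V. C v = j}) = 1" if I: "I \<in> E" for I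
  proof -
    obtain i where i: "i < k" "hits_once (D i) I" using D(3) I by blast
    have "I \<inter> {v\<in>V. C v = Suc i} = D i \<inter> I" using C(2)[OF i(1)] D(1) i(1) by blast
    then have "card (I \<inter> {v\<in>V. C v = Suc i}) = 1" using i(2) by (simp add: hits_once_iff_card)
    then show ?thesis by (intro exI[of _ "Suc i"]) simp
  qed
  then show ?thesis unfolding conflict_free_k_def conflict_free_def using C(1) by blast
qed

lemma exactly_hittable_partition_of_conflict_free_k:
  assumes "conflict_free_k V E k C"
  shows "\<exists>P. is_partition_k E k P \<and> (\<forall>i<k. exactly_hittable V (P i))"
proof -
  obtain J where J: "\<And>I. I \<in> E \<Longrightarrow> 1 \<le> J I \<and> card (I \<inter> {v\<in>V. C v = J I}) = 1"
    using assms unfolding conflict_free_k_def conflict_free_def by metis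
  have J_le: "J I \<le> k" if I: "I \<in> E" for I
  proof -
    obtain v where "I \<inter> {v\<in>V. C v = J I} = {v}"
      using J[OF I] card_1_singletonE by metis
    then have "v \<in> V" "C v = J I" by blast+
    then show ?thesis using assms unfolding conflict_free_k_def by metis
  qed
  define P where "P i = {I\<in>E. J I = Suc i}" for i
  have "is_partition_k E k P"
    unfolding is_partition_k_def
  proof (intro conjI allI impI)
    have "I \<in> P (J I - 1)" "J I - 1 < k" if "I \<in> E" for I
      using J[OF that] J_le[OF that] that by (auto simp: P_def)
    then show "(\<Union>i<k. P i) = E" by (auto simp: P_def)
  qed (auto simp: P_def)
  moreover have "exactly_hittable V (P i)" for i
    unfolding exactly_hittable_def
  proof (intro exI[of _ "{v\<in>V. C v = Suc i}"] conjI ballI)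
    fix I assume "I \<in> P i"
    then have "I \<in> E" "J I = Suc i" by (auto simp: P_def)
    then have "card (I \<inter> {v\<in>V. C v = Suc i}) = 1" using J by metis
    then show "card ({v\<in>V. C v = Suc i} \<inter> I) = 1" by (simp add: Int_commute)
  qed blast
  ultimately show ?thesis by blast
qed

theorem theorem4:
  fixes n k :: nat and E :: "nat set set"
  assumes "interval_hypergraph n E" and "k \<ge> 1"
  shows "(\<exists>P. is_partition_k E k P \<and> (\<forall>i<k. exactly_hittable {1..n} (P i)))
     \<longleftrightarrow> (\<exists>C. conflict_free_k {1..n} E k C)"
proof -
  have intervals: "\<And>I. I \<in> E \<Longrightarrow> \<exists>a b. I = {a..b}"
    using assms(1) unfolding interval_hypergraph_def by blast
  show ?thesis
    using conflict_free_k_of_exactly_hittable_partition[OF finite_atLeastAtMost intervals]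
      exactly_hittable_partition_of_conflict_free_k by blast
qed

end
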